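(* For every integer $m\geq 1$, \[ \mathcal{I}_m=\big\{(i,j,t,p)\in\mathbb{Z}^4 \;\big|\; 0\leq i,j\leq m,\ \max\{i+j-m,\ m-1-i-j\}\leq t\leq m-|i-j|,\ \max\{0,\ i+j-m,\ i+t-m,\ j+t-m\}\leq p\leq \min\{i,\ j,\ t,\ i+j+t+1-m\}\big\}. \] Moreover, $|\mathcal{I}_m|=\binom{m+4}{4}$.
   Context: Let $m$ be a positive integer, $S=\{1,2,\ldots,2m+1\}$, and let $X$ be the set of all $m$-element subsets of $S$. For an ordered triple $(x,y,z)\in X\times X\times X$ define $\partial(x,y,z):=(|x\cap y|,\ |x\cap z|,\ |y\cap z|,\ |x\cap y\cap z|)$. Let $\mathcal{I}_m$ denote the set of all four-tuples $(i,j,t,p)$ such that $\partial(x,y,z)=(i,j,t,p)$ for some $x,y,z\in X$. *)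

theory Defs
  imports Main
begin

definition Xset :: "nat \<Rightarrow> nat set set" where
  "Xset m = {x. x \<subseteq> {1..2*m+1} \<and> card x = m}"

definition profile :: "nat set \<Rightarrow> nat set \<Rightarrow> nat set \<Rightarrow> int \<times> int \<times> int \<times> int" where
  "profile x y z = (int (card (x \<inter> y)), int (card (x \<inter> z)), int (card (y \<inter> z)),
                    int (card (x \<inter> y \<inter> z)))"

definition Iset :: "nat \<Rightarrow> (int \<times> int \<times> int \<times> int) set" where
  "Iset m = {profile x y z | x y z. x \<in> Xset m \<and> y \<in> Xset m \<and> z \<in> Xset m}"

end

theory Submission
  imports Defs
begin

text \<open>Write n_xyz, n_xy, n_xz, n_yz, n_x, n_y, n_z, n_0 for the sizes of the eight Venn regions
  of x, y, z inside S. Since |x| = |y| = |z| = m and |S| = 2m+1, they are determined by the profile: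
  n_xyz = p, n_xy = i - p, n_x = m - i - j + p, n_0 = i + j + t + 1 - m - p, and so on. The stated
  inequalities say precisely that all eight are nonnegative, and any nonnegative sizes are
  realised by consecutive blocks of S. For the count, the admissible profiles correspond to the
  lattice points y of the simplex y1 + y2 + y3 + y4 \<le> m: writing the defect m - (y1 + y2 + y3 + y4)
  as 2k + 1 or 2k, take (n_xyz, n_xy, n_xz, n_yz) = (y1 + k, y2, y3, y4) or
  (y1, y2 + k, y3 + k, y4 + k) respectively.\<close>

definition admissible_profiles :: "nat \<Rightarrow> (int \<times> int \<times> int \<times> int) set" where
  "admissible_profiles m = {(i, j, t, p).
     0 \<le> p \<and> p \<le> i \<and> p \<le> j \<and> p \<le> t \<and>
     i + j \<le> int m + p \<and> i + t \<le> int m + p \<and> j + t \<le> int m + p \<and>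
     int m \<le> i + j + t + 1 - p}"

lemma admissible_profiles_eq:
  "admissible_profiles m = {(i, j, t, p) | i j t p :: int.
     0 \<le> i \<and> i \<le> int m \<and> 0 \<le> j \<and> j \<le> int m \<and>
     max (i + j - int m) (int m - 1 - i - j) \<le> t \<and> t \<le> int m - \<bar>i - j\<bar> \<and>
     max (max 0 (i + j - int m)) (max (i + t - int m) (j + t - int m)) \<le> p \<and>
     p \<le> min (min i j) (min t (i + j + t + 1 - int m))}"
proof -
  have "(0 \<le> p \<and> p \<le> i \<and> p \<le> j \<and> p \<le> t \<and>
         i + j \<le> int m + p \<and> i + t \<le> int m + p \<and> j + t \<le> int m + p \<and>
         int m \<le> i + j + t + 1 - p) \<longleftrightarrow>
        (0 \<le> i \<and> i \<le> int m \<and> 0 \<le> j \<and> j \<le> int m \<and>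
         max (i + j - int m) (int m - 1 - i - j) \<le> t \<and> t \<le> int m - \<bar>i - j\<bar> \<and>
         max (max 0 (i + j - int m)) (max (i + t - int m) (j + t - int m)) \<le> p \<and>
         p \<le> min (min i j) (min t (i + j + t + 1 - int m)))" for i j t p
    unfolding max.bounded_iff min.bounded_iff by (auto simp: abs_if)
  then show ?thesis
    unfolding admissible_profiles_def by auto
qed

lemma card_Int_Int_le:
  assumes "finite A"
  shows "card (A \<inter> B) + card (A \<inter> C) \<le> card A + card (A \<inter> B \<inter> C)"
proof -
  have "card (A \<inter> B) + card (A \<inter> C) = card ((A \<inter> B) \<union> (A \<inter> C)) + card (A \<inter> B \<inter> C)"
    using assms card_Un_Int[of "A \<inter> B" "A \<inter> C"] by (simp add: Int_ac)
  moreover have "card ((A \<inter> B) \<union> (A \<inter> C)) \<le> card A"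
    using assms by (intro card_mono) auto
  ultimately show ?thesis by linarith
qed

lemma int_card_Un3:
  assumes "finite A" "finite B" "finite C"
  shows "int (card (A \<union> B \<union> C)) =
           int (card A) + int (card B) + int (card C)
           - int (card (A \<inter> B)) - int (card (A \<inter> C)) - int (card (B \<inter> C))
           + int (card (A \<inter> B \<inter> C))"
proof -
  have "card (A \<union> B) + card (A \<inter> B) = card A + card B"
    using assms card_Un_Int[of A B] by simp
  moreover have "card (A \<union> B \<union> C) + card ((A \<inter> C) \<union> (B \<inter> C)) = card (A \<union> B) + card C"
    using assms card_Un_Int[of "A \<union> B" C] by (simp add: Int_Un_distrib2)
  moreover have "card ((A \<inter> C) \<union> (B \<inter> C)) + card (A \<inter> B \<inter> C) = card (A \<inter> C) + card (B \<inter> C)"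
    using assms card_Un_Int[of "A \<inter> C" "B \<inter> C"] by (simp add: Int_ac)
  ultimately show ?thesis by linarith
qed

lemma profile_admissible:
  assumes "x \<in> Xset m" "y \<in> Xset m" "z \<in> Xset m" and "profile x y z = (i, j, t, p)"
  shows "(i, j, t, p) \<in> admissible_profiles m"
proof -
  have sub: "x \<subseteq> {1..2*m+1}" "y \<subseteq> {1..2*m+1}" "z \<subseteq> {1..2*m+1}"
    and card: "card x = m" "card y = m" "card z = m"
    using assms(1-3) by (auto simp: Xset_def)
  then have fin: "finite x" "finite y" "finite z"
    by (auto intro: finite_subset)
  have ijtp: "i = int (card (x \<inter> y))" "j = int (card (x \<inter> z))" "t = int (card (y \<inter> z))"
    "p = int (card (x \<inter> y \<inter> z))"
    using assms(4) by (auto simp: profile_def)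
  have "i + j \<le> int m + p"
    using card_Int_Int_le[OF fin(1), of y z] card unfolding ijtp by linarith
  moreover have "i + t \<le> int m + p"
    using card_Int_Int_le[OF fin(2), of x z] card unfolding ijtp by (simp add: Int_ac)
  moreover have "j + t \<le> int m + p"
    using card_Int_Int_le[OF fin(3), of x y] card unfolding ijtp by (simp add: Int_ac)
  moreover have "card (x \<union> y \<union> z) \<le> 2 * m + 1"
    using card_mono[of "{1..2*m+1}" "x \<union> y \<union> z"] sub by simp
  then have "int m \<le> i + j + t + 1 - p"
    using int_card_Un3[OF fin] card unfolding ijtp by linarith
  moreover have "p \<le> i" "p \<le> j" "p \<le> t"
    unfolding ijtp using fin by (auto intro!: card_mono)
  ultimately show ?thesis
    unfolding admissible_profiles_def ijtp by simp
qed

lemma Venn_regions_realizable: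
  fixes n_xyz n_xy n_xz n_yz n_x n_y n_z :: nat
  obtains x y z :: "nat set" where
    "x \<union> y \<union> z \<subseteq> {1..n_xyz + n_xy + n_xz + n_yz + n_x + n_y + n_z}"
    "card x = n_xyz + n_xy + n_xz + n_x" "card y = n_xyz + n_xy + n_yz + n_y"
    "card z = n_xyz + n_xz + n_yz + n_z"
    "card (x \<inter> y) = n_xyz + n_xy" "card (x \<inter> z) = n_xyz + n_xz" "card (y \<inter> z) = n_xyz + n_yz"
    "card (x \<inter> y \<inter> z) = n_xyz"
proof -
  define c1 where "c1 = 1 + n_y"
  define c2 where "c2 = c1 + n_yz"
  define c3 where "c3 = c2 + n_xyz"
  define c4 where "c4 = c3 + n_xy"
  define c5 where "c5 = c4 + n_x"
  define c6 where "c6 = c5 + n_xz"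
  define c7 where "c7 = c6 + n_z"
  have ord: "1 \<le> c1" "c1 \<le> c2" "c2 \<le> c3" "c3 \<le> c4" "c4 \<le> c5" "c5 \<le> c6" "c6 \<le> c7"
    by (simp_all add: c1_def c2_def c3_def c4_def c5_def c6_def c7_def)
  define x where "x = {c2..<c6}"
  define y where "y = {1..<c4}"
  define z where "z = {c1..<c3} \<union> {c5..<c7}"
  have c7: "c7 = Suc (n_xyz + n_xy + n_xz + n_yz + n_x + n_y + n_z)"
    by (simp add: c1_def c2_def c3_def c4_def c5_def c6_def c7_def)
  have xy: "x \<inter> y = {c2..<c4}" and yz: "y \<inter> z = {c1..<c3}" and xyz: "x \<inter> y \<inter> z = {c2..<c3}"
    and xz: "x \<inter> z = {c2..<c3} \<union> {c5..<c6}"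
    using ord by (auto simp: x_def y_def z_def)
  show ?thesis
  proof (rule that)
    show "x \<union> y \<union> z \<subseteq> {1..n_xyz + n_xy + n_xz + n_yz + n_x + n_y + n_z}"
      using ord c7 by (auto simp: x_def y_def z_def)
    show "card x = n_xyz + n_xy + n_xz + n_x" "card y = n_xyz + n_xy + n_yz + n_y"
      by (simp_all add: x_def y_def c1_def c2_def c3_def c4_def c5_def c6_def)
    show "card z = n_xyz + n_xz + n_yz + n_z"
      using ord by (simp add: z_def card_Un_disjoint c2_def c3_def c4_def c5_def c6_def c7_def)
    show "card (x \<inter> y \<inter> z) = n_xyz"
      by (simp add: xyz c3_def)
    show "card (x \<inter> y) = n_xyz + n_xy" "card (y \<inter> z) = n_xyz + n_yz"
      by (simp_all add: xy yz c2_def c3_def c4_def)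
    show "card (x \<inter> z) = n_xyz + n_xz"
      using ord by (simp add: xz card_Un_disjoint c3_def c4_def c5_def c6_def)
  qed
qed

lemma admissible_profile_realizable:
  assumes "(i, j, t, p) \<in> admissible_profiles m"
  shows "(i, j, t, p) \<in> Iset m"
proof -
  define n_xyz n_xy n_xz n_yz n_x n_y n_z where
    "n_xyz = nat p" "n_xy = nat (i - p)" "n_xz = nat (j - p)" "n_yz = nat (t - p)"
    "n_x = nat (int m - i - j + p)" "n_y = nat (int m - i - t + p)" "n_z = nat (int m - j - t + p)"
  have sizes: "int n_xyz = p" "int n_xy = i - p" "int n_xz = j - p" "int n_yz = t - p"
    "int n_x = int m - i - j + p" "int n_y = int m - i - t + p" "int n_z = int m - j - t + p"
    using assms by (auto simp: admissible_profiles_def n_xyz_n_xy_n_xz_n_yz_n_x_n_y_n_z_def)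
  have "int (n_xyz + n_xy + n_xz + n_yz + n_x + n_y + n_z) \<le> int (2 * m + 1)"
    using assms unfolding of_nat_add sizes by (simp add: admissible_profiles_def)
  then have total: "n_xyz + n_xy + n_xz + n_yz + n_x + n_y + n_z \<le> 2 * m + 1"
    by (simp only: of_nat_le_iff)
  obtain x y z :: "nat set" where
    union: "x \<union> y \<union> z \<subseteq> {1..n_xyz + n_xy + n_xz + n_yz + n_x + n_y + n_z}" and
    card: "card x = n_xyz + n_xy + n_xz + n_x" "card y = n_xyz + n_xy + n_yz + n_y"
      "card z = n_xyz + n_xz + n_yz + n_z"
      "card (x \<inter> y) = n_xyz + n_xy" "card (x \<inter> z) = n_xyz + n_xz"
      "card (y \<inter> z) = n_xyz + n_yz" "card (x \<inter> y \<inter> z) = n_xyz"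
    by (rule Venn_regions_realizable)
  have "x \<union> y \<union> z \<subseteq> {1..2 * m + 1}"
    using union total by auto
  moreover have "int (card x) = int m" "int (card y) = int m" "int (card z) = int m"
    unfolding card of_nat_add sizes by simp_all
  ultimately have "x \<in> Xset m" "y \<in> Xset m" "z \<in> Xset m"
    by (auto simp: Xset_def)
  moreover have "(i, j, t, p) = profile x y z"
    unfolding profile_def card of_nat_add sizes by simp
  ultimately show ?thesis
    unfolding Iset_def by blast
qed

lemma Iset_eq_admissible_profiles: "Iset m = admissible_profiles m"
proof (intro equalityI subsetI)
  fix q assume "q \<in> Iset m"
  then obtain x y z where "x \<in> Xset m" "y \<in> Xset m" "z \<in> Xset m" "q = profile x y z"
    unfolding Iset_def by blast
  then show "q \<in> admissible_profiles m"
    using profile_admissible by (cases q) metis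
next
  fix q assume "q \<in> admissible_profiles m"
  then show "q \<in> Iset m"
    using admissible_profile_realizable by (cases q) metis
qed

definition int_simplex :: "nat \<Rightarrow> (int \<times> int \<times> int \<times> int) set" where
  "int_simplex n = {(a, b, c, d). 0 \<le> a \<and> 0 \<le> b \<and> 0 \<le> c \<and> 0 \<le> d \<and> a + b + c + d \<le> int n}"

lemma card_int_simplex: "card (int_simplex n) = (n + 4) choose 4"
proof -
  define f :: "int \<times> int \<times> int \<times> int \<Rightarrow> nat list" where
    "f = (\<lambda>(a, b, c, d). [nat a, nat b, nat c, nat d, nat (int n - a - b - c - d)])"
  have "inj_on f (int_simplex n)"
    by (auto simp: inj_on_def f_def int_simplex_def eq_nat_nat_iff)
  moreover have "f ` int_simplex n = {l. length l = 5 \<and> sum_list l = n}"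
  proof
    show "f ` int_simplex n \<subseteq> {l. length l = 5 \<and> sum_list l = n}"
      by (auto simp: f_def int_simplex_def nat_add_distrib[symmetric])
    show "{l. length l = 5 \<and> sum_list l = n} \<subseteq> f ` int_simplex n"
    proof
      fix l :: "nat list" assume "l \<in> {l. length l = 5 \<and> sum_list l = n}"
      then obtain a b c d e where "l = [a, b, c, d, e]" and "a + b + c + d + e = n"
        by (auto simp: numeral_eq_Suc length_Suc_conv)
      then have "f (int a, int b, int c, int d) = l"
        by (auto simp: f_def)
      moreover have "(int a, int b, int c, int d) \<in> int_simplex n"
        using \<open>a + b + c + d + e = n\<close> by (auto simp: int_simplex_def)
      ultimately show "l \<in> f ` int_simplex n"
        by (metis image_eqI)
    qed
  qed
  ultimately have "card (int_simplex n) = card {l :: nat list. length l = 5 \<and> sum_list l = n}"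
    by (metis card_image)
  also have "\<dots> = (n + 4) choose 4"
    using binomial_symmetric[of n "n + 4"] by (simp add: card_length_sum_list add.commute)
  finally show ?thesis .
qed

definition simplex_to_profile :: "nat \<Rightarrow> int \<times> int \<times> int \<times> int \<Rightarrow> int \<times> int \<times> int \<times> int" where
  "simplex_to_profile m = (\<lambda>(y1, y2, y3, y4).
     let d = int m - (y1 + y2 + y3 + y4); k = d div 2 in
     if odd d then (y1 + k + y2, y1 + k + y3, y1 + k + y4, y1 + k)
     else (y1 + y2 + k, y1 + y3 + k, y1 + y4 + k, y1))"

definition profile_to_simplex :: "nat \<Rightarrow> int \<times> int \<times> int \<times> int \<Rightarrow> int \<times> int \<times> int \<times> int" where
  "profile_to_simplex m = (\<lambda>(i, j, t, p).
     let s = i + j + t - 2 * p in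
     if s < int m then (p - (int m - 1 - s), i - p, j - p, t - p)
     else (p, i - p - (s - int m), j - p - (s - int m), t - p - (s - int m)))"

lemma simplex_to_profile_odd:
  assumes "int m - (y1 + y2 + y3 + y4) = 2 * k + 1"
  shows "simplex_to_profile m (y1, y2, y3, y4) = (y1 + k + y2, y1 + k + y3, y1 + k + y4, y1 + k)"
proof -
  have "odd (int m - (y1 + y2 + y3 + y4))" "(int m - (y1 + y2 + y3 + y4)) div 2 = k"
    unfolding assms by simp_all
  then show ?thesis
    unfolding simplex_to_profile_def Let_def prod.case by presburger
qed

lemma simplex_to_profile_even:
  assumes "int m - (y1 + y2 + y3 + y4) = 2 * k"
  shows "simplex_to_profile m (y1, y2, y3, y4) = (y1 + y2 + k, y1 + y3 + k, y1 + y4 + k, y1)"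
proof -
  have "even (int m - (y1 + y2 + y3 + y4))" "(int m - (y1 + y2 + y3 + y4)) div 2 = k"
    unfolding assms by simp_all
  then show ?thesis
    unfolding simplex_to_profile_def Let_def prod.case by presburger
qed

lemma simplex_to_profile_mem_and_inverse:
  assumes "y \<in> int_simplex m"
  shows "simplex_to_profile m y \<in> admissible_profiles m \<and> profile_to_simplex m (simplex_to_profile m y) = y"
proof -
  obtain y1 y2 y3 y4 where y: "y = (y1, y2, y3, y4)"
    by (cases y) blast
  have ineqs: "0 \<le> y1" "0 \<le> y2" "0 \<le> y3" "0 \<le> y4" "y1 + y2 + y3 + y4 \<le> int m"
    using assms by (simp_all add: y int_simplex_def)
  obtain k where "int m - (y1 + y2 + y3 + y4) = 2 * k + 1 \<or> int m - (y1 + y2 + y3 + y4) = 2 * k"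
    by (metis oddE evenE)
  then consider (odd) "int m - (y1 + y2 + y3 + y4) = 2 * k + 1" "0 \<le> k"
    | (even) "int m - (y1 + y2 + y3 + y4) = 2 * k" "0 \<le> k"
    using ineqs(5) by linarith
  then show ?thesis
  proof cases
    case odd
    then show ?thesis
      using ineqs by (simp add: y simplex_to_profile_odd admissible_profiles_def profile_to_simplex_def)
  next
    case even
    then show ?thesis
      using ineqs by (simp add: y simplex_to_profile_even admissible_profiles_def profile_to_simplex_def)
  qed
qed

lemma profile_to_simplex_mem_and_inverse:
  assumes "q \<in> admissible_profiles m"
  shows "profile_to_simplex m q \<in> int_simplex m \<and> simplex_to_profile m (profile_to_simplex m q) = q"
proof -
  obtain i j t p where q: "q = (i, j, t, p)"
    by (cases q) blast
  have ineqs: "0 \<le> p" "p \<le> i" "p \<le> j" "p \<le> t"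
    "i + j \<le> int m + p" "i + t \<le> int m + p" "j + t \<le> int m + p" "int m \<le> i + j + t + 1 - p"
    using assms by (simp_all add: q admissible_profiles_def)
  consider (below) "i + j + t - 2 * p < int m" | (above) "int m \<le> i + j + t - 2 * p"
    by linarith
  then show ?thesis
  proof cases
    case below
    define k where "k = int m - 1 - (i + j + t - 2 * p)"
    have image: "profile_to_simplex m q = (p - k, i - p, j - p, t - p)"
      using below by (simp add: q profile_to_simplex_def k_def)
    have simplex: "(p - k, i - p, j - p, t - p) \<in> int_simplex m"
      using below ineqs by (simp add: int_simplex_def k_def)
    have defect: "int m - ((p - k) + (i - p) + (j - p) + (t - p)) = 2 * k + 1"
      by (simp add: k_def)
    have "simplex_to_profile m (profile_to_simplex m q) = q"
      unfolding image simplex_to_profile_odd[OF defect] by (simp add: q)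
    with simplex show ?thesis
      unfolding image by blast
  next
    case above
    define k where "k = i + j + t - 2 * p - int m"
    have image: "profile_to_simplex m q = (p, i - p - k, j - p - k, t - p - k)"
      using above by (simp add: q profile_to_simplex_def k_def)
    have simplex: "(p, i - p - k, j - p - k, t - p - k) \<in> int_simplex m"
      using above ineqs by (simp add: int_simplex_def k_def)
    have defect: "int m - (p + (i - p - k) + (j - p - k) + (t - p - k)) = 2 * k"
      by (simp add: k_def)
    have "simplex_to_profile m (profile_to_simplex m q) = q"
      unfolding image simplex_to_profile_even[OF defect] by (simp add: q)
    with simplex show ?thesis
      unfolding image by blast
  qed
qed

lemma bij_betw_simplex_to_profile:
  "bij_betw (simplex_to_profile m) (int_simplex m) (admissible_profiles m)"
  by (rule bij_betw_byWitness[where f' = "profile_to_simplex m"])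
    (use simplex_to_profile_mem_and_inverse profile_to_simplex_mem_and_inverse in blast)+

theorem proposition3p1:
  fixes m :: nat
  assumes "m \<ge> 1"
  shows "Iset m = {(i, j, t, p) | i j t p :: int.
            0 \<le> i \<and> i \<le> int m \<and> 0 \<le> j \<and> j \<le> int m \<and>
            max (i + j - int m) (int m - 1 - i - j) \<le> t \<and> t \<le> int m - \<bar>i - j\<bar> \<and>
            max (max 0 (i + j - int m)) (max (i + t - int m) (j + t - int m)) \<le> p \<and>
            p \<le> min (min i j) (min t (i + j + t + 1 - int m))}
         \<and> card (Iset m) = (m + 4) choose 4"
proof -
  have "card (admissible_profiles m) = (m + 4) choose 4"
    using bij_betw_same_card[OF bij_betw_simplex_to_profile] card_int_simplex by simp
  then show ?thesis
    unfolding Iset_eq_admissible_profiles admissible_profiles_eq[symmetric] by simp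
qed

end
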